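(* Let $P=\{x\in\mathbb R^n : Ax=b,\ Bx\le d\}$ with $A\in\mathbb R^{m_A\times n}$, $B\in\mathbb R^{m_B\times n}$ be a pointed polyhedron and let $x_1,x_2$ be distinct points of $P$. Set $u:=x_2-x_1$ and let $C_{A,B,u}$ be the intersection of the cone $\{(x,y^+,y^-)\in\mathbb R^{n+2m_B} : Ax=0,\ Bx=y^+-y^-,\ y^+,y^-\ge 0\}$ with the hyperplanes $y^-_i=0$ for each $i$ with $(Bu)_i\ge 0$ and $y^+_i=0$ for each $i$ with $(Bu)_i\le 0$. Then for every extreme ray $(g,y^+,y^-)$ of $C_{A,B,u}$, the vector $g$ (which is a circuit direction of $P$ sign-compatible with $u$ with respect to $B$) is a strictly feasible direction at $x_1$ in $P$.
   Context: $P$ is pointed means $\operatorname{rank}\binom{A}{B}=n$. The circuits of $P$ are the $g\in\ker(A)\setminus\{0\}$ (normalized to coprime integer components) for which no $x\in\ker(A)\setminus\{0\}$ satisfies $\operatorname{supp}(Bx)\subsetneq\operatorname{supp}(Bg)$; a circuit direction is a positive multiple of a circuit. Vectors $x,y$ are sign-compatible with respect to $B$ if $(Bx)_i(By)_i\ge0$ for all $i$. A direction $g$ is strictly feasible at $x_1\in P$ if $x_1+\alpha g\in P$ for some $\alpha>0$. *)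

theory Defs
  imports "HOL-Analysis.Analysis"
begin

definition polyhedron ::
  "real^'n^'ma \<Rightarrow> real^'ma \<Rightarrow> real^'n^'mb \<Rightarrow> real^'mb \<Rightarrow> (real^'n) set" where
  "polyhedron A b B d = {x. A *v x = b \<and> (\<forall>i. (B *v x) $ i \<le> d $ i)}"

definition stack_matrix :: "real^'n^'ma \<Rightarrow> real^'n^'mb \<Rightarrow> real^'n^('ma + 'mb)" where
  "stack_matrix A B = (\<chi> i. case i of Inl j \<Rightarrow> A $ j | Inr j \<Rightarrow> B $ j)"

definition pointed :: "real^'n^'ma \<Rightarrow> real^'n^'mb \<Rightarrow> bool" where
  "pointed A B \<longleftrightarrow> rank (stack_matrix A B) = CARD('n)"

definition cone_C ::
  "real^'n^'ma \<Rightarrow> real^'n^'mb \<Rightarrow> real^'n \<Rightarrow> ((real^'n) \<times> (real^'mb) \<times> (real^'mb)) set" where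
  "cone_C A B u = {(x, yp, ym).
      A *v x = 0 \<and> B *v x = yp - ym \<and> (\<forall>i. yp $ i \<ge> 0 \<and> ym $ i \<ge> 0) \<and>
      (\<forall>i. (B *v u) $ i \<ge> 0 \<longrightarrow> ym $ i = 0) \<and>
      (\<forall>i. (B *v u) $ i \<le> 0 \<longrightarrow> yp $ i = 0)}"

definition extreme_ray :: "'a::real_vector \<Rightarrow> 'a set \<Rightarrow> bool" where
  "extreme_ray r K \<longleftrightarrow> r \<noteq> 0 \<and> r \<in> K \<and> (\<lambda>t. t *\<^sub>R r) ` {0..} face_of K"

definition strictly_feasible :: "real^'n \<Rightarrow> real^'n \<Rightarrow> (real^'n) set \<Rightarrow> bool" where
  "strictly_feasible g x1 P \<longleftrightarrow> (\<exists>\<alpha>>0. x1 + \<alpha> *\<^sub>R g \<in> P)"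

end

theory Submission
  imports Defs
begin

text \<open>If (B g)_i > 0 then y+_i > 0, which the cone
  allows only when (B u)_i > 0; then (B x1)_i < (B x2)_i \<le> d_i, so the i-th inequality is slack
  at x1. Moving from x1 along g keeps A x = b, and a short enough step keeps every inequality.
  Pointedness and extremality are what make g a circuit in the paper.\<close>

lemma small_step_preserves_slack_inequalities:
  fixes c v d :: "real^'m"
  assumes "\<And>i. c $ i \<le> d $ i"
    and "\<And>i. v $ i > 0 \<Longrightarrow> c $ i < d $ i"
  shows "\<exists>t>0. \<forall>i. c $ i + t * v $ i \<le> d $ i"
proof -
  have "\<forall>\<^sub>F t in at_right 0. c $ i + t * v $ i \<le> d $ i" for i
  proof (cases "c $ i < d $ i")
    case True
    have "((\<lambda>t. c $ i + t * v $ i) \<longlongrightarrow> c $ i + 0 * v $ i) (at_right 0)"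
      by (intro tendsto_intros)
    then have "\<forall>\<^sub>F t in at_right 0. c $ i + t * v $ i < d $ i"
      using True by (intro order_tendstoD(2)) simp_all
    then show ?thesis by (rule eventually_mono) simp
  next
    case False
    then have "v $ i \<le> 0" and "c $ i = d $ i"
      using assms[of i] by (auto simp: not_less intro: leI)
    then show ?thesis
      using eventually_at_right_less[of 0]
      by (auto elim!: eventually_mono simp: mult_nonneg_nonpos)
  qed
  then have "\<forall>\<^sub>F t in at_right 0. t > 0 \<and> (\<forall>i. c $ i + t * v $ i \<le> d $ i)"
    by (intro eventually_conj eventually_at_right_less eventually_all_finite)
  then show ?thesis
    using eventually_happens[of _ "at_right (0::real)"] by auto
qed

lemma strictly_feasible_polyhedronI:
  assumes "x1 \<in> polyhedron A b B d" and "A *v g = 0"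
    and "\<And>i. (B *v g) $ i > 0 \<Longrightarrow> (B *v x1) $ i < d $ i"
  shows "strictly_feasible g x1 (polyhedron A b B d)"
proof -
  have "\<And>i. (B *v x1) $ i \<le> d $ i" using assms(1) by (simp add: polyhedron_def)
  with assms(3) obtain t :: real where "t > 0"
    and step: "\<And>i. (B *v x1) $ i + t * (B *v g) $ i \<le> d $ i"
    using small_step_preserves_slack_inequalities by metis
  have "x1 + t *\<^sub>R g \<in> polyhedron A b B d"
    using assms(1,2) step
    by (simp add: polyhedron_def matrix_vector_right_distrib matrix_vector_mult_scaleR)
  with \<open>t > 0\<close> show ?thesis
    unfolding strictly_feasible_def by blast
qed

lemma cone_C_positive_row_imp_positive_direction:
  assumes "(g, yp, ym) \<in> cone_C A B u" and "(B *v g) $ i > 0"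
  shows "(B *v u) $ i > 0"
proof -
  from assms(1) have "(B *v g) $ i = yp $ i - ym $ i" and "ym $ i \<ge> 0"
    and "(B *v u) $ i \<le> 0 \<Longrightarrow> yp $ i = 0"
    by (auto simp: cone_C_def)
  with assms(2) show ?thesis by force
qed

lemma cone_C_strictly_feasible:
  assumes "x1 \<in> polyhedron A b B d" and "x2 \<in> polyhedron A b B d"
    and "(g, yp, ym) \<in> cone_C A B (x2 - x1)"
  shows "strictly_feasible g x1 (polyhedron A b B d)"
proof (rule strictly_feasible_polyhedronI[OF assms(1)])
  show "A *v g = 0" using assms(3) by (simp add: cone_C_def)
next
  fix i
  assume "(B *v g) $ i > 0"
  then have "(B *v x1) $ i < (B *v x2) $ i"
    using cone_C_positive_row_imp_positive_direction[OF assms(3)]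
    by (simp add: matrix_vector_mult_diff_distrib)
  also have "\<dots> \<le> d $ i" using assms(2) by (simp add: polyhedron_def)
  finally show "(B *v x1) $ i < d $ i" .
qed

theorem corollary4:
  fixes A :: "real^'n^'ma" and b :: "real^'ma"
    and B :: "real^'n^'mb" and d :: "real^'mb"
    and x1 x2 g :: "real^'n" and yp ym :: "real^'mb"
  assumes "pointed A B"
    and "x1 \<in> polyhedron A b B d" and "x2 \<in> polyhedron A b B d" and "x1 \<noteq> x2"
    and "extreme_ray (g, yp, ym) (cone_C A B (x2 - x1))"
  shows "strictly_feasible g x1 (polyhedron A b B d)"
proof -
  have "(g, yp, ym) \<in> cone_C A B (x2 - x1)"
    using assms(5) by (simp add: extreme_ray_def)
  with assms(2,3) show ?thesis
    by (rule cone_C_strictly_feasible)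
qed

end
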